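(* Consider one iteration of noisy Gallager-B decoding on a $(d_v,d_c)$-regular LDPC code with $d_v\ge4$, under the density-evolution assumptions that the correct codeword is all-zero, the decoding neighborhood is cycle-free, and all incoming variable-to-check messages are independently in error with probability $p_0$. Let $d_T\ge2$ be an integer, $d=\lceil\frac{d_v-1}{2}\rceil$, $$p_{\text{thr}}=\binom{d_v-1}{\lfloor\frac{d_v-1}{2}\rfloor}^{-\frac{1}{d-1}}d_c^{-\frac{d}{d-1}}d_T^{-\frac{1}{d-1}}(d_T+1)^{-\frac{d}{d-1}},$$ and suppose $p_{\text{maj}}\le p_{\text{thr}}$, $p_{\text{xor}}\le\frac{d_T+1}{d_c}p_{\text{thr}}$, $p_{\text{and}}\le\frac{d_T+1}{d_T}p_{\text{thr}}$. Let $p_{\text{reg}}=p_{\text{xor}}+(d_T+1)p_{\text{thr}}$. If $p_0<p_{\text{reg}}$, then the bit error probability $p_e^{\text{dec}}$ of each variable-to-check message after one iteration satisfies $$p_{\text{maj}}<p_e^{\text{dec}}\le p_{\text{maj}}+\frac{1}{d_T}p_{\text{thr}}.$$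
   Context: Noisy Gallager-B iteration: for each Tanner-graph edge $(v,c)$, the check-to-variable message $m_{c\to v}=\bigoplus_{v'\in\mathcal N(c)\setminus v}m_{v'\to c}$ is computed by an XOR gate whose output is flipped independently with probability $p_{\text{xor}}$; the new variable-to-check message $m_{v\to c}$ equals $x$ if at least $b=\lfloor\frac{d_v+1}{2}\rfloor$ of the messages $m_{c'\to v}$, $c'\in\mathcal N(v)\setminus c$, equal $x$, and a uniformly random bit otherwise, and is computed by a majority gate whose output is flipped independently with probability $p_{\text{maj}}$ (all gate errors independent, all probabilities $<1/2$). $p_{\text{and}}$ denotes the error probability of AND gates (appearing only in the hypotheses). *)

theory Defs
  imports "HOL-Probability.Probability"
begin

text \<open>Density-evolution model of one noisy Gallager-B iteration (all-zero codeword,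
cycle-free neighbourhood). A boolean value True means "the message is in error".\<close>

definition check_msg_err :: "nat \<Rightarrow> real \<Rightarrow> real \<Rightarrow> bool pmf" where
  "check_msg_err dc pxor p0 =
     do { k \<leftarrow> binomial_pmf (dc - 1) p0;
          f \<leftarrow> bernoulli_pmf pxor;
          return_pmf (odd k \<noteq> f) }"

definition var_msg_err :: "nat \<Rightarrow> real \<Rightarrow> real \<Rightarrow> bool pmf" where
  "var_msg_err dv pmaj pc =
     do { k \<leftarrow> binomial_pmf (dv - 1) pc;
          r \<leftarrow> bernoulli_pmf (1/2);
          f \<leftarrow> bernoulli_pmf pmaj;
          let b = (dv + 1) div 2;
          let pre = (if k \<ge> b then True else if (dv - 1) - k \<ge> b then False else r);
          return_pmf (pre \<noteq> f) }"

definition pe_dec :: "nat \<Rightarrow> nat \<Rightarrow> real \<Rightarrow> real \<Rightarrow> real \<Rightarrow> real" where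
  "pe_dec dv dc pxor pmaj p0 =
     pmf (var_msg_err dv pmaj (pmf (check_msg_err dc pxor p0) True)) True"

definition p_thr :: "nat \<Rightarrow> nat \<Rightarrow> nat \<Rightarrow> real" where
  "p_thr dv dc dT =
     (let d = nat \<lceil>(real dv - 1) / 2\<rceil> in
        real ((dv - 1) choose ((dv - 1) div 2)) powr (- 1 / (real d - 1))
      * real dc powr (- real d / (real d - 1))
      * real dT powr (- 1 / (real d - 1))
      * (real dT + 1) powr (- real d / (real d - 1)))"

end

theory Submission
  imports Defs
begin

text \<open>A check-to-variable message is wrong with probability p_c between p_xor and
p_xor + (d_c - 1) p_0 (union bound), so p_0 < p_reg gives p_c < d_c (d_T + 1) p_thr.
After the majority gate the error is p_maj + (1 - 2 p_maj) S, where S, the probability that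
the majority vote itself is wrong, is positive and at most the binomial tail
C(d_v - 1, d) p_c^d with d = floor(d_v/2). The threshold is exactly the fixed point of
C(d_v - 1, d) (d_c (d_T + 1) p)^d = p / d_T, hence S < p_thr / d_T.\<close>

lemma binomial_weights_sum:
  fixes p :: real
  shows "(\<Sum>k\<le>n. real (n choose k) * p^k * (1-p)^(n-k)) = 1"
  using binomial_ring[of p "1-p" n] by simp

lemma binomial_tail_le:
  fixes p :: real
  assumes "0 \<le> p" "p \<le> 1" "d \<le> m"
  shows "(\<Sum>k\<in>{d..m}. real (m choose k) * p^k * (1-p)^(m-k)) \<le> real (m choose d) * p^d"
proof -
  have "(\<Sum>k\<in>{d..m}. real (m choose k) * p^k * (1-p)^(m-k))
      \<le> (\<Sum>k\<in>{d..m}. real (m choose d) * p^d * (real ((m-d) choose (k-d)) * p^(k-d) * (1-p)^(m-k)))"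
  proof (rule sum_mono)
    fix k assume k: "k \<in> {d..m}"
    have "real (m choose k) \<le> real (m choose k) * real (k choose d)"
      using k by (simp add: Suc_leI zero_less_binomial mult_le_cancel_left1)
    also have "\<dots> = real (m choose d) * real ((m-d) choose (k-d))"
      using choose_mult[of d k m] k by (metis atLeastAtMost_iff of_nat_mult)
    finally have "real (m choose k) * (p^k * (1-p)^(m-k))
        \<le> real (m choose d) * real ((m-d) choose (k-d)) * (p^k * (1-p)^(m-k))"
      using assms(1,2) by (intro mult_right_mono) auto
    moreover have "p^k = p^d * p^(k-d)"
      using k by (simp add: power_add[symmetric])
    ultimately show "real (m choose k) * p^k * (1-p)^(m-k)
        \<le> real (m choose d) * p^d * (real ((m-d) choose (k-d)) * p^(k-d) * (1-p)^(m-k))"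
      by (simp add: algebra_simps)
  qed
  also have "\<dots> = real (m choose d) * p^d
      * (\<Sum>j\<le>m-d. real ((m-d) choose j) * p^j * (1-p)^(m-d-j))"
  proof -
    have "{d..m} = (\<lambda>j. j + d) ` {..m-d}"
      using assms(3) by (auto simp: image_iff) (metis add.commute atMost_iff diff_le_mono le_add_diff_inverse)
    then show ?thesis
      by (simp add: sum_distrib_left sum.reindex inj_on_def add.commute diff_diff_left)
  qed
  also have "\<dots> = real (m choose d) * p^d"
    by (simp only: binomial_weights_sum mult_1_right)
  finally show ?thesis .
qed

lemma pmf_check_msg_err:
  assumes "0 \<le> p0" "p0 \<le> 1" "0 \<le> pxor" "pxor \<le> 1"
  shows "pmf (check_msg_err dc pxor p0) True =
     (\<Sum>k\<le>dc-1. real ((dc-1) choose k) * p0^k * (1-p0)^(dc-1-k)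
        * (if odd k then 1 - pxor else pxor))"
  unfolding check_msg_err_def pmf_bind
  using assms
  by (subst expectation_binomial_pmf') (auto intro!: sum.cong simp: pmf_bind indicator_def)

lemma pmf_check_msg_err_bounds:
  assumes "0 \<le> p0" "p0 \<le> 1" "0 \<le> pxor" "pxor \<le> 1/2"
  shows "pxor \<le> pmf (check_msg_err dc pxor p0) True"
    and "pmf (check_msg_err dc pxor p0) True \<le> pxor + real (dc - 1) * p0"
proof -
  define n where "n = dc - 1"
  define w where "w k = real (n choose k) * p0^k * (1-p0)^(n-k)" for k
  have w_nonneg: "w k \<ge> 0" for k
    unfolding w_def using assms(1,2) by simp
  have w_sum: "(\<Sum>k\<le>n. w k) = 1"
    unfolding w_def by (rule binomial_weights_sum)
  have pc: "pmf (check_msg_err dc pxor p0) True = (\<Sum>k\<le>n. w k * (if odd k then 1 - pxor else pxor))"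
    unfolding w_def n_def using assms by (simp add: pmf_check_msg_err)
  have "(\<Sum>k\<le>n. w k * pxor) \<le> (\<Sum>k\<le>n. w k * (if odd k then 1 - pxor else pxor))"
    using w_nonneg assms(4) by (intro sum_mono) (auto intro: mult_left_mono)
  then show "pxor \<le> pmf (check_msg_err dc pxor p0) True"
    unfolding pc by (simp add: sum_distrib_right[symmetric] w_sum)
  \<comment> \<open>union bound: each term is at most w k (p_xor + 1), and the k = 0 term at most w 0 p_xor\<close>
  have "(\<Sum>k\<le>n. w k * (if odd k then 1 - pxor else pxor))
      \<le> (\<Sum>k\<le>n. w k * (pxor + 1) - (if k = 0 then w k else 0))"
    using w_nonneg assms(3)
    by (intro sum_mono) (auto intro: mult_left_mono simp: algebra_simps)
  also have "\<dots> = pxor + 1 - (1 - p0) ^ n"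
    by (simp add: sum_subtractf sum_distrib_right[symmetric] w_sum) (simp add: w_def)
  also have "\<dots> \<le> pxor + real n * p0"
    using Bernoulli_inequality[of "-p0" n] assms(2) by simp
  finally show "pmf (check_msg_err dc pxor p0) True \<le> pxor + real (dc - 1) * p0"
    unfolding pc n_def .
qed

definition majority_vote_err :: "nat \<Rightarrow> real \<Rightarrow> real" where
  "majority_vote_err dv pc =
     (\<Sum>k\<le>dv-1. real ((dv-1) choose k) * pc^k * (1-pc)^(dv-1-k) *
        (if (dv+1) div 2 \<le> k then 1 else if (dv+1) div 2 \<le> (dv-1)-k then 0 else 1/2))"

lemma pmf_var_msg_err:
  assumes "0 \<le> pc" "pc \<le> 1" "0 \<le> pmaj" "pmaj \<le> 1"
  shows "pmf (var_msg_err dv pmaj pc) True = pmaj + (1 - 2*pmaj) * majority_vote_err dv pc"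
proof -
  define w where "w k = real ((dv-1) choose k) * pc^k * (1-pc)^(dv-1-k)" for k
  have "pmf (var_msg_err dv pmaj pc) True = (\<Sum>k\<le>dv-1. w k *
      (if (dv+1) div 2 \<le> k then 1 - pmaj else if (dv+1) div 2 \<le> (dv-1)-k then pmaj else 1/2))"
    unfolding var_msg_err_def pmf_bind w_def using assms
    by (subst expectation_binomial_pmf')
      (auto intro!: sum.cong simp: pmf_bind indicator_def Let_def field_simps)
  also have "\<dots> = (\<Sum>k\<le>dv-1. pmaj * w k + (1 - 2*pmaj) * (w k *
      (if (dv+1) div 2 \<le> k then 1 else if (dv+1) div 2 \<le> (dv-1)-k then 0 else 1/2)))"
    by (intro sum.cong) (auto simp: algebra_simps)
  also have "\<dots> = pmaj + (1 - 2*pmaj) * majority_vote_err dv pc"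
    unfolding majority_vote_err_def w_def
    using binomial_weights_sum[where p = pc and n = "dv-1"]
    by (simp add: sum.distrib sum_distrib_left[symmetric] del: One_nat_def)
  finally show ?thesis .
qed

lemma majority_vote_err_pos:
  assumes "dv \<ge> 3" "0 < pc" "pc \<le> 1"
  shows "majority_vote_err dv pc > 0"
proof -
  have "(dv+1) div 2 \<le> dv-1"
    using assms(1) by auto
  then have "pc ^ (dv-1) = real ((dv-1) choose (dv-1)) * pc^(dv-1) * (1-pc)^(dv-1-(dv-1)) *
      (if (dv+1) div 2 \<le> dv-1 then 1 else if (dv+1) div 2 \<le> (dv-1)-(dv-1) then 0 else 1/2)"
    by simp
  also have "\<dots> \<le> majority_vote_err dv pc"
    unfolding majority_vote_err_def using assms(2,3)
    by (intro member_le_sum) auto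
  finally show ?thesis
    using assms(2) by (meson less_le_trans zero_less_power)
qed

lemma majority_vote_err_le:
  assumes "0 \<le> pc" "pc \<le> 1"
  shows "majority_vote_err dv pc \<le> real ((dv-1) choose (dv div 2)) * pc ^ (dv div 2)"
proof -
  \<comment> \<open>fewer than d_v/2 wrong inputs means a correct majority\<close>
  have "majority_vote_err dv pc
      \<le> (\<Sum>k\<le>dv-1. if dv div 2 \<le> k then real ((dv-1) choose k) * pc^k * (1-pc)^(dv-1-k) else 0)"
    unfolding majority_vote_err_def using assms
    by (intro sum_mono) (auto intro: mult_left_le)
  also have "\<dots> = (\<Sum>k\<in>{dv div 2..dv-1}. real ((dv-1) choose k) * pc^k * (1-pc)^(dv-1-k))"
    by (rule sum.mono_neutral_cong_right) auto
  also have "\<dots> \<le> real ((dv-1) choose (dv div 2)) * pc ^ (dv div 2)"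
    using assms by (intro binomial_tail_le) auto
  finally show ?thesis .
qed

lemma powr_fixed_point:
  fixes C x t s :: real and d :: nat
  assumes "C > 0" "x > 0" "t > 0" "s > 0" "d \<ge> 2"
  defines "P \<equiv> C powr (- 1 / (real d - 1)) * x powr (- real d / (real d - 1))
      * t powr (- 1 / (real d - 1)) * s powr (- real d / (real d - 1))"
  shows "C * (x * s * P) ^ d = P / t"
proof -
  have d1: "real (d - 1) = real d - 1" "real d - 1 \<noteq> 0"
    using assms(5) by auto
  have powr_pow: "(a powr r) ^ n = a powr (r * real n)" if "a > 0" for a r n
    using that by (metis powr_powr powr_realpow powr_gt_zero)
  have "P ^ (d-1) = C powr (-1) * x powr (- real d) * t powr (-1) * s powr (- real d)"
    unfolding P_def power_mult_distrib using assms d1 by (simp add: powr_pow)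
  also have "\<dots> = 1 / (C * x^d * t * s^d)"
    using assms by (simp add: powr_minus powr_realpow divide_simps)
  finally have "P ^ (d-1) = 1 / (C * x^d * t * s^d)" .
  moreover have "P ^ d = P * P ^ (d-1)"
    using assms(5) by (metis Suc_diff_1 less_le_trans pos2 power_Suc)
  ultimately have "C * x^d * s^d * P^d = P / t"
    using assms by (simp add: field_simps)
  then show ?thesis
    by (simp add: power_mult_distrib mult_ac)
qed

lemma nat_ceiling_half_pred: "nat \<lceil>(real n - 1) / 2\<rceil> = n div 2"
proof (cases "even n")
  case True
  then obtain j where j: "n = 2 * j" by blast
  have "\<lceil>(real n - 1) / 2\<rceil> = int j"
    unfolding j by (subst ceiling_unique) auto
  then show ?thesis using j by simp
next
  case False
  then obtain j where j: "n = 2 * j + 1" using oddE by blast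
  have "\<lceil>(real n - 1) / 2\<rceil> = int j"
    unfolding j by (subst ceiling_unique) auto
  then show ?thesis using j by simp
qed

lemma p_thr_fixed_point:
  assumes "dv \<ge> 4" "dc \<ge> 1" "dT \<ge> 1"
  shows "real ((dv-1) choose (dv div 2)) * (real dc * (real dT + 1) * p_thr dv dc dT) ^ (dv div 2)
           = p_thr dv dc dT / real dT"
    and "p_thr dv dc dT > 0"
proof -
  define d where "d = dv div 2"
  define C where "C = real ((dv-1) choose d)"
  have d2: "d \<ge> 2"
    unfolding d_def using assms(1) by auto
  have "(dv - 1) - d = (dv - 1) div 2"
    unfolding d_def by arith
  then have C_eq: "C = real ((dv-1) choose ((dv-1) div 2))"
    unfolding C_def using binomial_symmetric[of d "dv-1"] d_def by auto
  have C_pos: "C > 0"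
    unfolding C_eq by simp
  have p_thr_eq: "p_thr dv dc dT = C powr (- 1 / (real d - 1))
      * real dc powr (- real d / (real d - 1))
      * real dT powr (- 1 / (real d - 1)) * (real dT + 1) powr (- real d / (real d - 1))"
    unfolding p_thr_def Let_def nat_ceiling_half_pred C_eq d_def ..
  show "real ((dv-1) choose (dv div 2)) * (real dc * (real dT + 1) * p_thr dv dc dT) ^ (dv div 2)
      = p_thr dv dc dT / real dT"
    using powr_fixed_point[of C "real dc" "real dT" "real dT + 1" d] C_pos assms d2
    unfolding p_thr_eq C_def d_def by simp
  show "p_thr dv dc dT > 0"
    unfolding p_thr_eq using C_pos assms by simp
qed

lemma pmf_check_msg_err_less:
  assumes "dc \<ge> 2" "0 \<le> p0" "p0 \<le> 1" "0 \<le> pxor" "pxor \<le> 1/2"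
    and "pxor \<le> (real dT + 1) / real dc * P" and "p0 < pxor + (real dT + 1) * P"
  shows "pmf (check_msg_err dc pxor p0) True < real dc * (real dT + 1) * P"
proof -
  have dc_pred: "real (dc - 1) = real dc - 1"
    using assms(1) by simp
  have "real (dc - 1) * p0 < real (dc - 1) * (pxor + (real dT + 1) * P)"
    using assms(1,7) by (intro mult_strict_left_mono) auto
  moreover have "pmf (check_msg_err dc pxor p0) True \<le> pxor + real (dc - 1) * p0"
    using assms(2-5) by (rule pmf_check_msg_err_bounds(2))
  ultimately have "pmf (check_msg_err dc pxor p0) True < pxor + real (dc - 1) * (pxor + (real dT + 1) * P)"
    by linarith
  also have "\<dots> = real dc * pxor + (real dc - 1) * (real dT + 1) * P"
    unfolding dc_pred by (simp add: algebra_simps)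
  also have "\<dots> \<le> real dc * (real dT + 1) * P"
    using assms(1,6) by (simp add: field_simps)
  finally show ?thesis .
qed

lemma majority_vote_err_less_p_thr:
  assumes "dv \<ge> 4" "dc \<ge> 1" "dT \<ge> 1" "0 \<le> pc" "pc \<le> 1"
    and "pc < real dc * (real dT + 1) * p_thr dv dc dT"
  shows "majority_vote_err dv pc < p_thr dv dc dT / real dT"
proof -
  define C where "C = real ((dv-1) choose (dv div 2))"
  have "pc ^ (dv div 2) < (real dc * (real dT + 1) * p_thr dv dc dT) ^ (dv div 2)"
    using assms by (intro power_strict_mono) auto
  moreover have "C > 0"
    unfolding C_def using assms(1) by (simp add: zero_less_binomial_iff)
  ultimately have "C * pc ^ (dv div 2) < C * (real dc * (real dT + 1) * p_thr dv dc dT) ^ (dv div 2)"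
    by (rule mult_strict_left_mono)
  also have "\<dots> = p_thr dv dc dT / real dT"
    unfolding C_def using p_thr_fixed_point(1) assms(1-3) by simp
  finally show ?thesis
    using majority_vote_err_le[OF assms(4,5), of dv] unfolding C_def by linarith
qed

theorem lemma2:
  fixes dv dc dT :: nat and p0 pxor pmaj pand :: real
  assumes "dv \<ge> 4" and "dc \<ge> 2" and "dT \<ge> 2"
    and "0 \<le> p0" and "p0 \<le> 1"
    and "0 < pxor" and "pxor < 1/2"
    and "0 < pmaj" and "pmaj < 1/2"
    and "0 < pand" and "pand < 1/2"
    and "pmaj \<le> p_thr dv dc dT"
    and "pxor \<le> (real dT + 1) / real dc * p_thr dv dc dT"
    and "pand \<le> (real dT + 1) / real dT * p_thr dv dc dT"
    and "p0 < pxor + (real dT + 1) * p_thr dv dc dT"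
  shows "pmaj < pe_dec dv dc pxor pmaj p0
       \<and> pe_dec dv dc pxor pmaj p0 \<le> pmaj + p_thr dv dc dT / real dT"
proof -
  define pc where "pc = pmf (check_msg_err dc pxor p0) True"
  define S where "S = majority_vote_err dv pc"
  have pc_pos: "0 < pc" and pc_le_1: "pc \<le> 1"
    using pmf_check_msg_err_bounds(1)[of p0 pxor dc] assms(4-7) pmf_le_1
    unfolding pc_def by fastforce+
  have "pc < real dc * (real dT + 1) * p_thr dv dc dT"
    unfolding pc_def using assms(2,4-7,13,15) by (intro pmf_check_msg_err_less) auto
  then have S_upper: "S < p_thr dv dc dT / real dT"
    unfolding S_def using assms(1-3) pc_pos pc_le_1 by (intro majority_vote_err_less_p_thr) auto
  have S_pos: "S > 0"
    unfolding S_def using majority_vote_err_pos pc_pos pc_le_1 assms(1) by simp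
  have "pe_dec dv dc pxor pmaj p0 = pmaj + (1 - 2*pmaj) * S"
    unfolding pe_dec_def S_def pc_def using assms(8,9)
    by (intro pmf_var_msg_err) (simp_all add: pmf_le_1)
  moreover have "0 < (1 - 2*pmaj) * S" "(1 - 2*pmaj) * S \<le> S"
    using S_pos assms(8,9) by (simp_all add: mult_le_cancel_right1)
  ultimately show ?thesis
    using S_upper by linarith
qed

end
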